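(* Let $X$ be a real Banach space, $x\in X$ and $\delta\in[0,2]$. Then: (1) $P_{B_X}(x,\delta)\subseteq Q_{B_X}(-x,\delta)$ whenever $\|x\|\ge1$; (2) $P_{S_X}(x,\delta)\subseteq Q_{S_X}(-x,\delta)$; (3) $Q_{S_X}(x)=Q_{B_X}(x)$.
   Context: $B_X,S_X$ are the closed unit ball and unit sphere. For non-empty bounded $F$, $r(F,x)=\sup_{y\in F}\|x-y\|$, $Q_F(x,\delta)=\{y\in F:\|x-y\|\ge r(F,x)-\delta\}$, $Q_F(x)=Q_F(x,0)$. For non-empty closed $A$, $P_A(x,\delta)=\{y\in A:\|x-y\|\le\inf_{z\in A}\|x-z\|+\delta\}$. *)

theory Defs
  imports "HOL-Analysis.Analysis"
begin

definition farthest_radius :: "'a::real_normed_vector set \<Rightarrow> 'a \<Rightarrow> real" where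
  "farthest_radius F x = (SUP y\<in>F. norm (x - y))"

definition Qfar :: "'a::real_normed_vector set \<Rightarrow> 'a \<Rightarrow> real \<Rightarrow> 'a set" where
  "Qfar F x \<delta> = {y \<in> F. norm (x - y) \<ge> farthest_radius F x - \<delta>}"

definition Pnear :: "'a::real_normed_vector set \<Rightarrow> 'a \<Rightarrow> real \<Rightarrow> 'a set" where
  "Pnear A x \<delta> = {y \<in> A. norm (x - y) \<le> (INF z\<in>A. norm (x - z)) + \<delta>}"

end

theory Submission
  imports Defs
begin

text \<open>
  Every point of the unit ball lies within distance \<open>\<parallel>x\<parallel> + 1\<close> of \<open>x\<close>, and the antipode
  \<open>-u\<close> of the unit vector \<open>u\<close> in the direction of \<open>x\<close> attains this bound, while \<open>u\<close> itself
  realises the distance \<open>\<bar>\<parallel>x\<parallel> - 1\<bar>\<close> from \<open>x\<close> to the sphere. Since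
  \<open>2 max \<parallel>x\<parallel> \<parallel>y\<parallel> \<le> \<parallel>x + y\<parallel> + \<parallel>x - y\<parallel>\<close>, a point \<open>y\<close> that is \<open>\<delta>\<close>-nearest to \<open>x\<close> is
  therefore \<open>\<delta>\<close>-farthest from \<open>-x\<close>. Finally a point of the ball at distance
  \<open>\<parallel>x\<parallel> + 1\<close> from \<open>x\<close> must have norm \<open>1\<close>, so the farthest points of ball and sphere agree.
\<close>

lemma unit_vector_in_direction:
  fixes x :: "'a::real_normed_vector"
  assumes "\<exists>v::'a. v \<noteq> 0"
  obtains u where "norm u = 1" "x = norm x *\<^sub>R u"
proof (cases "x = 0")
  case True
  obtain v :: 'a where "v \<noteq> 0" using assms by blast
  with True show ?thesis by (intro that[of "v /\<^sub>R norm v"]) auto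
next
  case False
  then show ?thesis by (intro that[of "x /\<^sub>R norm x"]) auto
qed

lemma norm_add_ge_twice_max_norm_minus_norm_diff:
  fixes x y :: "'a::real_normed_vector"
  shows "2 * max (norm x) (norm y) - norm (x - y) \<le> norm (x + y)"
proof -
  have "2 * norm x \<le> norm (x + y) + norm (x - y)"
    using norm_triangle_ineq[of "x + y" "x - y"] by (simp add: scaleR_2[symmetric])
  moreover have "2 * norm y \<le> norm (x + y) + norm (x - y)"
    using norm_triangle_ineq4[of "x + y" "x - y"] by (simp add: scaleR_2[symmetric])
  ultimately show ?thesis by linarith
qed

lemma norm_diff_le_farthest_radius:
  fixes x :: "'a::real_normed_vector"
  assumes "bounded F" "y \<in> F"
  shows "norm (x - y) \<le> farthest_radius F x"
proof -
  obtain a where a: "\<And>z. z \<in> F \<Longrightarrow> norm z \<le> a"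
    using assms(1) by (auto simp: bounded_iff)
  have "bdd_above ((\<lambda>z. norm (x - z)) ` F)"
  proof (rule bdd_aboveI2)
    fix z assume "z \<in> F"
    then show "norm (x - z) \<le> norm x + a"
      using a norm_triangle_ineq4[of x z] by fastforce
  qed
  then show ?thesis
    unfolding farthest_radius_def by (rule cSUP_upper[OF assms(2)])
qed

lemma farthest_radius_between_sphere_cball:
  fixes x :: "'a::real_normed_vector"
  assumes "\<exists>v::'a. v \<noteq> 0" "sphere 0 1 \<subseteq> F" "F \<subseteq> cball 0 1"
  shows "farthest_radius F x = norm x + 1"
proof (rule antisym)
  obtain u where u: "norm u = 1" "x = norm x *\<^sub>R u"
    using unit_vector_in_direction[OF assms(1)] .
  then have "-u \<in> F" using assms(2) by auto
  show "farthest_radius F x \<le> norm x + 1"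
    unfolding farthest_radius_def
  proof (rule cSUP_least)
    show "F \<noteq> {}" using \<open>-u \<in> F\<close> by blast
    fix y assume "y \<in> F"
    then show "norm (x - y) \<le> norm x + 1"
      using assms(3) norm_triangle_ineq4[of x y] by fastforce
  qed
  have "x - -u = (norm x + 1) *\<^sub>R u"
    using u by (metis diff_minus_eq_add scaleR_add_left scaleR_one)
  then have "norm (x - -u) = norm x + 1"
    using u by simp
  then show "norm x + 1 \<le> farthest_radius F x"
    using norm_diff_le_farthest_radius[OF bounded_subset[OF bounded_cball assms(3)] \<open>-u \<in> F\<close>,
        where x = x]
    by simp
qed

lemma INF_norm_diff_le_norm_diff:
  fixes x :: "'a::real_normed_vector"
  assumes "z \<in> A"
  shows "(INF z\<in>A. norm (x - z)) \<le> norm (x - z)"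
  by (rule cINF_lower[OF _ assms]) (auto intro: bdd_belowI2[where m=0])

lemma INF_norm_diff_sphere_le:
  fixes x :: "'a::real_normed_vector"
  assumes "\<exists>v::'a. v \<noteq> 0" "sphere 0 1 \<subseteq> A"
  shows "(INF z\<in>A. norm (x - z)) \<le> \<bar>norm x - 1\<bar>"
proof -
  obtain u where u: "norm u = 1" "x = norm x *\<^sub>R u"
    using unit_vector_in_direction[OF assms(1)] .
  have "x - u = (norm x - 1) *\<^sub>R u"
    using u by (metis scaleR_collapse scaleR_diff_left scaleR_one)
  then have "norm (x - u) = \<bar>norm x - 1\<bar>"
    using u by simp
  moreover have "u \<in> A" using u assms(2) by auto
  ultimately show ?thesis
    using INF_norm_diff_le_norm_diff by metis
qed

lemma mem_Qfar_uminus_iff: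
  fixes x :: "'a::real_normed_vector"
  shows "y \<in> Qfar F (-x) \<delta> \<longleftrightarrow> y \<in> F \<and> farthest_radius F (-x) - \<delta> \<le> norm (x + y)"
  by (simp add: Qfar_def norm_minus_commute[of "-x"] add.commute)

theorem proposition2p12:
  fixes x :: "'a::banach" and \<delta> :: real
  assumes nontriv: "\<exists>v::'a. v \<noteq> 0"
    and delta: "0 \<le> \<delta>" "\<delta> \<le> 2"
  shows "(norm x \<ge> 1 \<longrightarrow> Pnear (cball 0 1) x \<delta> \<subseteq> Qfar (cball 0 1) (-x) \<delta>)
       \<and> Pnear (sphere 0 1) x \<delta> \<subseteq> Qfar (sphere 0 1) (-x) \<delta>
       \<and> Qfar (sphere 0 1) x 0 = Qfar (cball 0 1) x 0"
proof -
  have radius_sphere: "farthest_radius (sphere 0 1) z = norm z + 1" for z :: 'a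
    by (rule farthest_radius_between_sphere_cball[OF nontriv]) auto
  have radius_cball: "farthest_radius (cball 0 1) z = norm z + 1" for z :: 'a
    by (rule farthest_radius_between_sphere_cball[OF nontriv]) auto
  have "Pnear (cball 0 1) x \<delta> \<subseteq> Qfar (cball 0 1) (-x) \<delta>" if "norm x \<ge> 1"
  proof
    fix y assume "y \<in> Pnear (cball 0 1) x \<delta>"
    then have "norm y \<le> 1" "norm (x - y) \<le> norm x - 1 + \<delta>"
      using INF_norm_diff_sphere_le[OF nontriv, of "cball 0 1" x] that
      by (auto simp: Pnear_def)
    then show "y \<in> Qfar (cball 0 1) (-x) \<delta>"
      using norm_add_ge_twice_max_norm_minus_norm_diff[of x y]
      by (auto simp: mem_Qfar_uminus_iff radius_cball)
  qed
  moreover have "Pnear (sphere 0 1) x \<delta> \<subseteq> Qfar (sphere 0 1) (-x) \<delta>"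
  proof
    fix y assume "y \<in> Pnear (sphere 0 1) x \<delta>"
    then have "norm y = 1" "norm (x - y) \<le> \<bar>norm x - 1\<bar> + \<delta>"
      using INF_norm_diff_sphere_le[OF nontriv, of "sphere 0 1" x]
      by (auto simp: Pnear_def)
    then show "y \<in> Qfar (sphere 0 1) (-x) \<delta>"
      using norm_add_ge_twice_max_norm_minus_norm_diff[of x y]
      by (auto simp: mem_Qfar_uminus_iff radius_sphere)
  qed
  moreover have "Qfar (sphere 0 1) x 0 = Qfar (cball 0 1) x 0"
  proof -
    have "norm y = 1" if "norm y \<le> 1" "norm x + 1 \<le> norm (x - y)" for y
      using that norm_triangle_ineq4[of x y] by linarith
    then show ?thesis
      by (auto simp: Qfar_def radius_sphere radius_cball)
  qed
  ultimately show ?thesis by blast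
qed

end
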